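(* For every $l\in\mathbb N$, the curve $\Gamma_l=\{P_l(\lambda,\mu^2)=0\}$ intersects the line $\{\mu=0\}$ (in the projective plane containing $\mathbb C^2_{(\lambda,\mu)}$) exactly at the points with $\lambda$-abscissas $0,\ 1\cdot(l-1),\ 2(l-2),\ \dots,\ (l-1)\cdot 1$. All these intersection points are singular points of $\Gamma_l$, except for the points with abscissas $0$ and $\frac{l^2}{4}$ (the latter only when $l$ is even), which are regular points of $\Gamma_l$ at which $\Gamma_l$ intersects the line $\{\mu=0\}$ orthogonally.
   Context: For $l\in\mathbb N$ and $\mu\in\mathbb C$, $H_l$ is the tridiagonal $l\times l$ matrix with entries $H_{l;jj}=(1-j)(l-j+1)$, $H_{l;j,j+1}=\mu j$, $H_{l;j,j-1}=\mu(l-j+1)$, and $H_{l;ij}=0$ if $|i-j|\geq 2$; $\det(H_l+\lambda\,\mathrm{Id})$ is a polynomial of degree $l$ in $(\lambda,\mu^2)$, written $P_l(\lambda,\mu^2)$. *)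

theory Defs
  imports "HOL-Analysis.Derivative" "Jordan_Normal_Form.Determinant"
begin

text \<open>The tridiagonal l x l matrix H_l (indices 1..l in the paper, stored 0-based).\<close>
definition H_mat :: "nat \<Rightarrow> complex \<Rightarrow> complex mat" where
  "H_mat l \<mu> = mat l l (\<lambda>(i, j).
     (let a = i + 1; b = j + 1 in
      if b = a then (1 - of_nat a) * (of_nat l - of_nat a + 1)
      else if b = a + 1 then \<mu> * of_nat a
      else if a = b + 1 then \<mu> * (of_nat l - of_nat a + 1)
      else 0))"

text \<open>Defining function of the curve Gamma_l: (lambda, mu) maps to P_l(lambda, mu^2) = det(H_l + lambda Id).\<close>
definition Gamma_eq :: "nat \<Rightarrow> complex \<Rightarrow> complex \<Rightarrow> complex" where
  "Gamma_eq l lam \<mu> = det (H_mat l \<mu> + lam \<cdot>\<^sub>m 1\<^sub>m l)"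

definition d_lam :: "(complex \<Rightarrow> complex \<Rightarrow> complex) \<Rightarrow> complex \<Rightarrow> complex \<Rightarrow> complex" where
  "d_lam F x y = deriv (\<lambda>t. F t y) x"

definition d_mu :: "(complex \<Rightarrow> complex \<Rightarrow> complex) \<Rightarrow> complex \<Rightarrow> complex \<Rightarrow> complex" where
  "d_mu F x y = deriv (\<lambda>t. F x t) y"

definition singular_point :: "(complex \<Rightarrow> complex \<Rightarrow> complex) \<Rightarrow> complex \<Rightarrow> complex \<Rightarrow> bool" where
  "singular_point F x y \<longleftrightarrow> F x y = 0 \<and> d_lam F x y = 0 \<and> d_mu F x y = 0"

definition regular_point :: "(complex \<Rightarrow> complex \<Rightarrow> complex) \<Rightarrow> complex \<Rightarrow> complex \<Rightarrow> bool" where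
  "regular_point F x y \<longleftrightarrow> F x y = 0 \<and> (d_lam F x y \<noteq> 0 \<or> d_mu F x y \<noteq> 0)"

text \<open>At a regular point, the tangent line (vectors (a,b) with F_lambda a + F_mu b = 0)
  is orthogonal to the line {mu = 0}, i.e. orthogonal to its direction (1,0).\<close>
definition meets_mu_axis_orthogonally :: "(complex \<Rightarrow> complex \<Rightarrow> complex) \<Rightarrow> complex \<Rightarrow> complex \<Rightarrow> bool" where
  "meets_mu_axis_orthogonally F x y \<longleftrightarrow>
     (\<forall>a b. d_lam F x y * a + d_mu F x y * b = 0 \<longrightarrow> a = 0)"

text \<open>The projective closure of the polynomial curve F = 0 passes through the point at infinity
  [1:0:0] of the line {mu = 0}: writing F = sum c_ij lambda^i mu^j of total degree d,
  the homogenisation vanishes at (1,0,0) iff c_d0 = 0.\<close>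
definition closure_meets_inf_point_of_mu_axis :: "(complex \<Rightarrow> complex \<Rightarrow> complex) \<Rightarrow> bool" where
  "closure_meets_inf_point_of_mu_axis F \<longleftrightarrow>
     (\<exists>d c. (\<forall>x y. F x y = (\<Sum>i\<le>d. \<Sum>j\<le>d - i. c i j * x ^ i * y ^ j))
            \<and> (\<exists>i\<le>d. c i (d - i) \<noteq> 0) \<and> c d 0 = 0)"

end

theory Submission
  imports Defs
begin

(* At mu = 0 the matrix H_l + lambda Id is diagonal, so P_l(lambda, 0) is the product of the
   factors lambda - k (l - k), k < l.  The mu-derivative vanishes on the axis mu = 0, since every
   non-identity permutation in the Leibniz expansion picks at least two off-diagonal entries, all
   of which are linear in mu.  Hence a point (x, 0) of the curve is regular iff x is a simple root
   of that product, i.e. iff k (l - k) = x has a single solution k < l, which happens exactly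
   for k = 0 and k = l/2; there the tangent is the vertical line lambda = x.
   Finally, on every line mu = s lambda the function P_l is a polynomial in lambda of degree at
   most l, while on mu = 0 it is monic of degree l; so the leading form of P_l is nonzero at
   (1, 0) and the projective closure misses the point at infinity of {mu = 0}. *)

lemma det_diagonal_mat:
  assumes "A \<in> carrier_mat n n" "diagonal_mat A"
  shows "det A = (\<Prod>i<n. A $$ (i, i))"
proof -
  have "upper_triangular A"
    using assms by (auto simp: upper_triangular_def diagonal_mat_def)
  then show ?thesis
    using assms by (simp add: det_upper_triangular prod_list_diag_prod atLeast0LessThan)
qed

lemma has_field_derivative_det_diagonal_add_hollow:
  fixes A B :: "'a :: real_normed_field mat"
  assumes A: "A \<in> carrier_mat n n" and B: "B \<in> carrier_mat n n"
    and diag: "diagonal_mat A" and hollow: "\<And>i. i < n \<Longrightarrow> B $$ (i, i) = 0"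
  shows "((\<lambda>\<mu>. det (A + \<mu> \<cdot>\<^sub>m B)) has_field_derivative 0) (at 0)"
proof -
  let ?S = "{p. p permutes {0..<n}}"
  let ?e = "\<lambda>p j \<mu>. A $$ (j, p j) + \<mu> * B $$ (j, p j)"
  have det_eq:
    "(\<lambda>\<mu>. det (A + \<mu> \<cdot>\<^sub>m B)) = (\<lambda>\<mu>. \<Sum>p\<in>?S. signof p * (\<Prod>j=0..<n. ?e p j \<mu>))"
    using A B
    by (intro ext) (auto simp: det_def'[of _ n] permutes_in_image intro!: sum.cong prod.cong)
  have term_0: "B $$ (i, p i) * (\<Prod>j\<in>{0..<n}-{i}. ?e p j 0) = 0"
    if p: "p permutes {0..<n}" and i: "i < n" for p i
  proof (cases "p = id")
    case True
    then show ?thesis using hollow i by simp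
  next
    case False
    then obtain a where a: "p a \<noteq> a" by (metis eq_id_iff)
    (* p moves both a and p a, hence some index other than i *)
    have "p (p a) \<noteq> p a" using a p by (metis permutes_inj injD)
    then obtain j where j: "j \<in> {0..<n} - {i}" "p j \<noteq> j"
      using a p by (metis Diff_iff atLeastLessThan_iff permutes_not_in singletonD zero_le)
    then have "A $$ (j, p j) = 0"
      using diag A p by (auto simp: diagonal_mat_def permutes_in_image)
    then show ?thesis using j by (intro mult_eq_0_iff[THEN iffD2] disjI2 prod_zero) auto
  qed
  let ?d = "\<lambda>p. \<Sum>i\<in>{0..<n}. B $$ (i, p i) * (\<Prod>j\<in>{0..<n}-{i}. ?e p j 0)"
  have "((\<lambda>\<mu>. \<Sum>p\<in>?S. signof p * (\<Prod>j=0..<n. ?e p j \<mu>)) has_field_derivative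
      (\<Sum>p\<in>?S. signof p * ?d p)) (at 0)"
    by (intro DERIV_sum DERIV_cmult has_field_derivative_prod) (auto intro!: derivative_eq_intros)
  also have "(\<Sum>p\<in>?S. signof p * ?d p) = 0"
  proof -
    have "?d p = 0" if "p \<in> ?S" for p
      using that by (intro sum.neutral ballI term_0) auto
    then show ?thesis by simp
  qed
  finally show ?thesis unfolding det_eq .
qed

lemma det_pencil_eq_poly:
  fixes A C :: "'a :: comm_ring_1 mat"
  assumes "A \<in> carrier_mat n n" "C \<in> carrier_mat n n"
  shows "\<exists>p. degree p \<le> n \<and> (\<forall>t. det (A + t \<cdot>\<^sub>m C) = poly p t)"
proof (intro exI conjI allI)
  let ?P = "mat n n (\<lambda>ij. [:A $$ ij, C $$ ij:])"
  show "degree (det ?P) \<le> n"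
    using degree_det_le[of n ?P 1] by (simp add: degree_pCons_le)
  fix t :: 'a
  interpret eval: comm_ring_hom "\<lambda>p. poly p t" by unfold_locales auto
  have "A + t \<cdot>\<^sub>m C = map_mat (\<lambda>p. poly p t) ?P"
    using assms by (intro eq_matI) (auto simp: algebra_simps)
  then show "det (A + t \<cdot>\<^sub>m C) = poly (det ?P) t" by simp
qed

lemma order_prod_linear_factors:
  fixes r :: "'b \<Rightarrow> 'a :: idom"
  assumes "finite I"
  shows "order x (\<Prod>k\<in>I. [:- r k, 1:]) = card {k \<in> I. r k = x}"
  using assms
proof (induction I rule: finite_induct)
  case (insert k I)
  have "(\<Prod>j\<in>I. [:- r j, 1:]) \<noteq> 0"
    using insert.hyps(1) by (simp add: prod_zero_iff)
  then have "order x (\<Prod>j\<in>insert k I. [:- r j, 1:])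
      = order x [:- r k, 1:] + order x (\<Prod>j\<in>I. [:- r j, 1:])"
    unfolding prod.insert[OF insert.hyps] by (intro order_mult) (simp del: mult_pCons_left)
  moreover have "order x [:- r k, 1:] = (if r k = x then 1 else 0)"
    using order_power_n_n[of x 1] by (auto intro: order_0I)
  moreover have "{j \<in> insert k I. r j = x}
      = (if r k = x then insert k {j \<in> I. r j = x} else {j \<in> I. r j = x})"
    by auto
  ultimately show ?case
    using insert by (cases "r k = x") simp_all
qed simp

lemma poly_pderiv_at_root_eq_0_iff:
  fixes p :: "'a :: field_char_0 poly"
  assumes "p \<noteq> 0" "poly p x = 0"
  shows "poly (pderiv p) x = 0 \<longleftrightarrow> 2 \<le> order x p"
proof -
  have "pderiv p \<noteq> 0"
    using assms pderiv_iszero by force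
  then show ?thesis
    using order_pderiv[OF assms] by (auto simp: order_root)
qed

lemma poly_bivariate_on_ray:
  fixes c :: "nat \<Rightarrow> nat \<Rightarrow> 'a :: comm_semiring_1"
  shows "poly (\<Sum>i\<le>d. \<Sum>j\<le>d-i. monom (c i j * s^j) (i+j)) t
       = (\<Sum>i\<le>d. \<Sum>j\<le>d-i. c i j * t^i * (s*t)^j)"
  by (simp add: poly_sum poly_monom power_add power_mult_distrib algebra_simps)

lemma coeff_bivariate_on_ray:
  fixes c :: "nat \<Rightarrow> nat \<Rightarrow> 'a :: comm_semiring_1"
  assumes "d \<le> k"
  shows "coeff (\<Sum>i\<le>d. \<Sum>j\<le>d-i. monom (c i j * s^j) (i+j)) k
       = (if k = d then poly (\<Sum>i\<le>d. monom (c i (d-i)) (d-i)) s else 0)"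
proof -
  have "coeff (\<Sum>i\<le>d. \<Sum>j\<le>d-i. monom (c i j * s^j) (i+j)) k
      = (\<Sum>i\<le>d. \<Sum>j\<le>d-i. if j = d - i \<and> k = d then c i j * s^j else 0)"
    using assms by (auto simp: coeff_sum coeff_monom intro!: sum.cong)
  also have "\<dots> = (if k = d then poly (\<Sum>i\<le>d. monom (c i (d-i)) (d-i)) s else 0)"
    by (simp add: poly_sum poly_monom mult.commute)
  finally show ?thesis .
qed

lemma not_closure_meets_inf_point_of_mu_axis:
  fixes F :: "complex \<Rightarrow> complex \<Rightarrow> complex"
  assumes rays: "\<And>s. \<exists>p. degree p \<le> n \<and> (\<forall>t. F t (s * t) = poly p t)"
    and axis: "\<And>t. F t 0 = poly q t" and top: "coeff q n \<noteq> 0"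
  shows "\<not> closure_meets_inf_point_of_mu_axis F"
proof
  assume "closure_meets_inf_point_of_mu_axis F"
  then obtain d c where F: "\<And>x y. F x y = (\<Sum>i\<le>d. \<Sum>j\<le>d - i. c i j * x ^ i * y ^ j)"
    and top_nonzero: "\<exists>i\<le>d. c i (d - i) \<noteq> 0" and "c d 0 = 0"
    unfolding closure_meets_inf_point_of_mu_axis_def by blast
  (* R s is the representation restricted to the line mu = s lambda; its coefficient of
     lambda^d is the leading form at (1, s), which is poly Q s *)
  define R where "R s = (\<Sum>i\<le>d. \<Sum>j\<le>d-i. monom (c i j * s^j) (i+j))" for s
  define Q where "Q = (\<Sum>i\<le>d. monom (c i (d-i)) (d-i))"
  have R_ray: "R s = p" if "\<forall>t. F t (s * t) = poly p t" for s p
    using that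
    by (intro poly_eq_poly_eq_iff[THEN iffD1] ext) (simp add: R_def poly_bivariate_on_ray F)
  have coeff_R: "coeff (R s) k = (if k = d then poly Q s else 0)" if "d \<le> k" for s k
    unfolding R_def Q_def using that by (rule coeff_bivariate_on_ray)
  have coeff_Q: "coeff Q (d - i) = c i (d - i)" if "i \<le> d" for i
  proof -
    have "coeff Q (d - i) = (\<Sum>i'\<le>d. if i' = i then c i' (d - i') else 0)"
      unfolding Q_def coeff_sum coeff_monom using that by (intro sum.cong) auto
    then show ?thesis using that by simp
  qed
  show False
  proof (cases "n < d")
    case True
    have "poly Q s = 0" for s
    proof -
      obtain p where p: "degree p \<le> n" "\<forall>t. F t (s * t) = poly p t" using rays by blast
      have "poly Q s = coeff (R s) d" using coeff_R[of d s] by simp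
      also have "\<dots> = coeff p d" using R_ray[OF p(2)] by simp
      also have "\<dots> = 0" using p(1) True by (intro coeff_eq_0) simp
      finally show ?thesis .
    qed
    moreover have "Q \<noteq> 0"
      using top_nonzero coeff_Q by force
    ultimately show False by (metis poly_all_0_iff_0)
  next
    case False
    have "poly Q 0 = 0"
      using coeff_Q[of d] \<open>c d 0 = 0\<close> by (simp add: poly_0_coeff_0)
    moreover have "R 0 = q"
      using axis by (intro R_ray) simp
    ultimately show False
      using False top coeff_R[of n 0] by (simp split: if_splits)
  qed
qed

lemma k_times_l_minus_k_eq_iff:
  fixes j k l :: nat
  assumes "j \<le> l" "k \<le> l"
  shows "j * (l - j) = k * (l - k) \<longleftrightarrow> j = k \<or> j + k = l"
proof -
  have "j * (l - j) = k * (l - k) \<longleftrightarrow> int j * (int l - int j) = int k * (int l - int k)"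
    using assms by (simp flip: of_nat_diff of_nat_mult)
  also have "\<dots> \<longleftrightarrow> (int j - int k) * (int l - int j - int k) = 0"
    by (simp add: algebra_simps)
  finally show ?thesis by auto
qed

lemma card_k_times_l_minus_k_level_set:
  fixes k l :: nat
  assumes "k < l"
  shows "card {j \<in> {..<l}. j * (l - j) = k * (l - k)} = (if k = 0 \<or> 2 * k = l then 1 else 2)"
proof -
  have "j * (l - j) = k * (l - k) \<longleftrightarrow> j = k \<or> j = l - k" if "j < l" for j :: nat
    using that assms k_times_l_minus_k_eq_iff[of j l k] by auto
  then have level_set: "{j \<in> {..<l}. j * (l - j) = k * (l - k)} = {k, l - k} \<inter> {..<l}"
    using assms by auto
  show ?thesis
  proof (cases "k = 0 \<or> 2 * k = l")
    case True
    then have "{k, l - k} \<inter> {..<l} = {k}"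
      using assms by auto
    then show ?thesis
      using True level_set by simp
  next
    case False
    then have "{k, l - k} \<inter> {..<l} = {k, l - k}" "k \<noteq> l - k"
      using assms by auto
    then show ?thesis
      using False level_set by simp
  qed
qed

lemma k_times_l_minus_k_eq_quarter_square_iff:
  assumes "k \<le> l"
  shows "(of_nat (k * (l - k)) :: complex) = of_nat (l\<^sup>2) / 4 \<longleftrightarrow> 2 * k = l"
proof -
  have "(of_nat (k * (l - k)) :: complex) = of_nat (l\<^sup>2) / 4
      \<longleftrightarrow> of_nat (4 * (k * (l - k))) = (of_nat (l\<^sup>2) :: complex)"
    unfolding eq_divide_eq of_nat_mult by (simp add: mult.commute)
  also have "\<dots> \<longleftrightarrow> int (4 * (k * (l - k))) = int (l\<^sup>2)"
    by (simp only: of_nat_eq_iff)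
  also have "\<dots> \<longleftrightarrow> (int l - 2 * int k)\<^sup>2 = 0"
  proof -
    have "(int l - 2 * int k)\<^sup>2 = int (l\<^sup>2) - int (4 * (k * (l - k)))"
      using assms by (simp add: of_nat_diff power2_eq_square algebra_simps)
    then show ?thesis by linarith
  qed
  finally show ?thesis by auto
qed

lemma regular_point_meets_mu_axis_orthogonally:
  assumes "F x y = 0" "d_mu F x y = 0" "d_lam F x y \<noteq> 0"
  shows "regular_point F x y \<and> meets_mu_axis_orthogonally F x y"
  using assms by (simp add: regular_point_def meets_mu_axis_orthogonally_def)

lemma singular_pointI:
  assumes "F x y = 0" "d_mu F x y = 0" "d_lam F x y = 0"
  shows "singular_point F x y"
  using assms by (simp add: singular_point_def)

definition Gamma_axis_poly :: "nat \<Rightarrow> complex poly" where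
  "Gamma_axis_poly l = (\<Prod>k<l. [:- of_nat (k * (l - k)), 1:])"

lemma Gamma_eq_mu_0: "Gamma_eq l t 0 = poly (Gamma_axis_poly l) t"
  unfolding Gamma_eq_def
  by (subst det_diagonal_mat[of _ l])
      (auto simp: H_mat_def diagonal_mat_def Gamma_axis_poly_def poly_prod of_nat_diff algebra_simps
        intro!: prod.cong)

lemma Gamma_eq_mu_0_roots: "{x. Gamma_eq l x 0 = 0} = {of_nat (k * (l - k)) | k. k < l}"
  by (auto simp: Gamma_eq_mu_0 Gamma_axis_poly_def poly_prod prod_zero_iff
      simp del: of_nat_mult)

lemma Gamma_axis_poly_nonzero: "Gamma_axis_poly l \<noteq> 0"
  by (simp add: Gamma_axis_poly_def prod_zero_iff del: mult_pCons_left)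

lemma coeff_Gamma_axis_poly_top: "coeff (Gamma_axis_poly l) l = 1"
proof -
  have "degree (Gamma_axis_poly l) = l"
    unfolding Gamma_axis_poly_def by (subst degree_prod_eq_sum_degree) auto
  moreover have "lead_coeff (Gamma_axis_poly l) = 1"
    unfolding Gamma_axis_poly_def by (simp add: lead_coeff_prod)
  ultimately show ?thesis by simp
qed

lemma order_Gamma_axis_poly:
  assumes "k < l"
  shows "order (of_nat (k * (l - k))) (Gamma_axis_poly l)
       = (if k = 0 \<or> 2 * k = l then 1 else 2)"
  unfolding Gamma_axis_poly_def order_prod_linear_factors[OF finite_lessThan]
  using card_k_times_l_minus_k_level_set[OF assms] by (simp only: of_nat_eq_iff)

lemma d_lam_Gamma_eq_mu_0: "d_lam (Gamma_eq l) x 0 = poly (pderiv (Gamma_axis_poly l)) x"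
  unfolding d_lam_def Gamma_eq_mu_0 by (rule DERIV_imp_deriv) (rule poly_DERIV)

lemma d_lam_Gamma_eq_at_root_nonzero_iff:
  assumes "k < l"
  shows "d_lam (Gamma_eq l) (of_nat (k * (l - k))) 0 \<noteq> 0 \<longleftrightarrow> k = 0 \<or> 2 * k = l"
proof -
  have root: "poly (Gamma_axis_poly l) (of_nat (k * (l - k))) = 0"
    using assms Gamma_eq_mu_0_roots[of l] by (auto simp: Gamma_eq_mu_0 simp del: of_nat_mult)
  show ?thesis
    unfolding d_lam_Gamma_eq_mu_0
      poly_pderiv_at_root_eq_0_iff[OF Gamma_axis_poly_nonzero root]
      order_Gamma_axis_poly[OF assms]
    by simp
qed

lemma Gamma_eq_mu_pencil:
  "Gamma_eq l x \<mu> = det ((H_mat l 0 + x \<cdot>\<^sub>m 1\<^sub>m l) + \<mu> \<cdot>\<^sub>m (H_mat l 1 - H_mat l 0))"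
  unfolding Gamma_eq_def
  by (rule arg_cong[where f = det], rule eq_matI) (auto simp: H_mat_def Let_def algebra_simps)

lemma d_mu_Gamma_eq_mu_0: "d_mu (Gamma_eq l) x 0 = 0"
  unfolding d_mu_def Gamma_eq_mu_pencil
  by (rule DERIV_imp_deriv, rule has_field_derivative_det_diagonal_add_hollow[of _ l])
    (auto simp: H_mat_def diagonal_mat_def)

lemma Gamma_eq_on_ray:
  "Gamma_eq l t (s * t) = det (H_mat l 0 + t \<cdot>\<^sub>m (1\<^sub>m l + s \<cdot>\<^sub>m (H_mat l 1 - H_mat l 0)))"
  unfolding Gamma_eq_def
  by (rule arg_cong[where f = det], rule eq_matI) (auto simp: H_mat_def Let_def algebra_simps)

lemma Gamma_eq_on_ray_eq_poly: "\<exists>p. degree p \<le> l \<and> (\<forall>t. Gamma_eq l t (s * t) = poly p t)"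
  unfolding Gamma_eq_on_ray by (rule det_pencil_eq_poly) (auto simp: H_mat_def)

theorem proposition1p11:
  fixes l :: nat
  assumes "l \<ge> 1"
  shows "{x. Gamma_eq l x 0 = 0} = {of_nat (k * (l - k)) | k. k < l}
    \<and> \<not> closure_meets_inf_point_of_mu_axis (Gamma_eq l)
    \<and> (\<forall>x. Gamma_eq l x 0 = 0 \<longrightarrow>
           (if x = 0 \<or> (even l \<and> x = of_nat (l\<^sup>2) / 4)
            then regular_point (Gamma_eq l) x 0 \<and> meets_mu_axis_orthogonally (Gamma_eq l) x 0
            else singular_point (Gamma_eq l) x 0))"
proof (intro conjI allI impI)
  show "{x. Gamma_eq l x 0 = 0} = {of_nat (k * (l - k)) | k. k < l}"
    by (rule Gamma_eq_mu_0_roots)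
  show "\<not> closure_meets_inf_point_of_mu_axis (Gamma_eq l)"
    using coeff_Gamma_axis_poly_top
    by (intro not_closure_meets_inf_point_of_mu_axis[OF Gamma_eq_on_ray_eq_poly Gamma_eq_mu_0]) simp
  fix x
  assume root: "Gamma_eq l x 0 = 0"
  then obtain k where k: "k < l" "x = of_nat (k * (l - k))"
    using Gamma_eq_mu_0_roots[of l] by blast
  have "x = 0 \<or> (even l \<and> x = of_nat (l\<^sup>2) / 4) \<longleftrightarrow> k = 0 \<or> 2 * k = l"
    using k k_times_l_minus_k_eq_quarter_square_iff[of k l] by auto
  then have "d_lam (Gamma_eq l) x 0 \<noteq> 0 \<longleftrightarrow> x = 0 \<or> (even l \<and> x = of_nat (l\<^sup>2) / 4)"
    using d_lam_Gamma_eq_at_root_nonzero_iff[OF k(1), folded k(2)] by blast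
  then show "if x = 0 \<or> (even l \<and> x = of_nat (l\<^sup>2) / 4)
      then regular_point (Gamma_eq l) x 0 \<and> meets_mu_axis_orthogonally (Gamma_eq l) x 0
      else singular_point (Gamma_eq l) x 0"
    using regular_point_meets_mu_axis_orthogonally[OF root d_mu_Gamma_eq_mu_0]
      singular_pointI[OF root d_mu_Gamma_eq_mu_0]
    unfolding if_bool_eq_conj by blast
qed

end
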